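(* Let $K:\mathbb{R}^2\to\mathbb{R}$ satisfy $K(x)\le K(y)$ whenever $|x|\ge|y|$, and let $u\in C^2(\mathbb{R}^2)$ solve $\Delta u+Ke^{2u}=0$ with $\sup_y\int_{B_R(y)}u^+\,dx<\infty$ for every $R>0$ and $\int_{\mathbb{R}^2}|K|e^{2u}\,dx<\infty$. Define $\bar u(r)=\frac1{2\pi}\int_0^{2\pi}u(r\cos\theta,r\sin\theta)\,d\theta$ for $r\ge0$. Then $$\int_{\mathbb{R}^2}|K(x)|e^{2\bar u(|x|)}\,dx<\infty.$$ If moreover $\int_{\mathbb{R}^2}|\ln|x||^2|K(x)|e^{2u(x)}\,dx<\infty$, then also $\int_{\mathbb{R}^2}(\ln|x|)^2|K(x)|e^{2\bar u(|x|)}\,dx<\infty$.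
   Context: $B_R(y)$ is the open disk of radius $R$ centered at $y$; $u^+=\max\{u,0\}$. The monotonicity hypothesis forces $K$ to be radially symmetric. *)

theory Defs
  imports "HOL-Analysis.Analysis"
begin

text \<open>Points of R^2 are pairs (x1,x2); the Euclidean norm of a pair is sqrt(x1^2+x2^2).\<close>

definition C2_with_laplacian :: "(real \<times> real \<Rightarrow> real) \<Rightarrow> (real \<times> real \<Rightarrow> real) \<Rightarrow> bool" where
  "C2_with_laplacian u L \<longleftrightarrow>
     (\<exists>u1 u2 u11 u12 u21 u22 :: real \<times> real \<Rightarrow> real.
        (\<forall>p. (u has_derivative (\<lambda>(h1,h2). u1 p * h1 + u2 p * h2)) (at p)) \<and>
        (\<forall>p. (u1 has_derivative (\<lambda>(h1,h2). u11 p * h1 + u12 p * h2)) (at p)) \<and>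
        (\<forall>p. (u2 has_derivative (\<lambda>(h1,h2). u21 p * h1 + u22 p * h2)) (at p)) \<and>
        continuous_on UNIV u11 \<and> continuous_on UNIV u12 \<and>
        continuous_on UNIV u21 \<and> continuous_on UNIV u22 \<and>
        (\<forall>p. L p = u11 p + u22 p))"

definition C2 :: "(real \<times> real \<Rightarrow> real) \<Rightarrow> bool" where
  "C2 u \<longleftrightarrow> (\<exists>L. C2_with_laplacian u L)"

definition laplacian :: "(real \<times> real \<Rightarrow> real) \<Rightarrow> real \<times> real \<Rightarrow> real" where
  "laplacian u = (SOME L. C2_with_laplacian u L)"

definition circ_avg :: "(real \<times> real \<Rightarrow> real) \<Rightarrow> real \<Rightarrow> real" where
  "circ_avg u r = (1 / (2 * pi)) * integral {0..2*pi} (\<lambda>\<theta>. u (r * cos \<theta>, r * sin \<theta>))"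

end

(*
  The monotonicity hypothesis makes K radial. Jensen's inequality for exp on each circle gives
    exp (2 ubar |x|) <= 1/(2 pi) * int_0^(2 pi) exp (2 u (R_t x)) dt,
  R_t being the rotation by t. Integrating against a nonnegative radial weight w, exchanging the
  integrations (Tonelli) and using the rotation invariance of Lebesgue measure on the plane yields
    int w e^(2 ubar) <= int w e^(2 u)
  for w = |K| and w = (ln |x|)^2 |K|. Rotation invariance comes from writing a rotation as three shears, each
  measure preserving by Fubini and translation invariance on the line.
*)
theory Submission
  imports Defs
begin

lemma borel_measurable_compose_continuous:
  fixes g :: "'a::topological_space \<Rightarrow> 'b::topological_space"
  assumes "continuous_on UNIV g" and "h \<in> borel_measurable borel"
  shows "(\<lambda>z. h (g z)) \<in> borel_measurable borel"
  using measurable_compose[OF borel_measurable_continuous_onI[OF assms(1)] assms(2)] .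

definition shear_fst :: "real \<Rightarrow> real \<times> real \<Rightarrow> real \<times> real" where
  "shear_fst a z = (fst z + a * snd z, snd z)"

definition shear_snd :: "real \<Rightarrow> real \<times> real \<Rightarrow> real \<times> real" where
  "shear_snd b z = (fst z, snd z + b * fst z)"

lemma shear_fst_measurable [measurable]: "shear_fst a \<in> borel_measurable borel"
  unfolding shear_fst_def by (intro borel_measurable_continuous_onI continuous_intros)

lemma shear_snd_measurable [measurable]: "shear_snd b \<in> borel_measurable borel"
  unfolding shear_snd_def by (intro borel_measurable_continuous_onI continuous_intros)

lemma nn_integral_lborel_shear_fst:
  fixes h :: "real \<times> real \<Rightarrow> ennreal"
  assumes h [measurable]: "h \<in> borel_measurable borel"
  shows "(\<integral>\<^sup>+ z. h (shear_fst a z) \<partial>lborel) = (\<integral>\<^sup>+ z. h z \<partial>lborel)"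
proof -
  have shear_measurable: "(\<lambda>z. h (fst z + a * snd z, snd z)) \<in> borel_measurable borel"
    by (rule borel_measurable_compose_continuous[OF _ h]) (intro continuous_intros)
  have "(\<integral>\<^sup>+ z. h (fst z + a * snd z, snd z) \<partial>lborel) =
        (\<integral>\<^sup>+ y. \<integral>\<^sup>+ x. h (x + a * y, y) \<partial>lborel \<partial>lborel)"
    using lborel_pair.nn_integral_snd[of "\<lambda>z. h (fst z + a * snd z, snd z)"] shear_measurable
    by (simp add: lborel_prod)
  also have "\<dots> = (\<integral>\<^sup>+ y. \<integral>\<^sup>+ x. h (x, y) \<partial>lborel \<partial>lborel)"
    using nn_integral_real_affine[of "\<lambda>x. h (x, _)" 1 "a * _"] by (simp add: add.commute)
  also have "\<dots> = (\<integral>\<^sup>+ z. h z \<partial>lborel)"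
    using lborel_pair.nn_integral_snd[of h] by (simp add: lborel_prod)
  finally show ?thesis by (simp add: shear_fst_def)
qed

lemma nn_integral_lborel_shear_snd:
  fixes h :: "real \<times> real \<Rightarrow> ennreal"
  assumes h [measurable]: "h \<in> borel_measurable borel"
  shows "(\<integral>\<^sup>+ z. h (shear_snd b z) \<partial>lborel) = (\<integral>\<^sup>+ z. h z \<partial>lborel)"
proof -
  have shear_measurable: "(\<lambda>z. h (fst z, snd z + b * fst z)) \<in> borel_measurable borel"
    by (rule borel_measurable_compose_continuous[OF _ h]) (intro continuous_intros)
  have "(\<integral>\<^sup>+ z. h (fst z, snd z + b * fst z) \<partial>lborel) =
        (\<integral>\<^sup>+ x. \<integral>\<^sup>+ y. h (x, y + b * x) \<partial>lborel \<partial>lborel)"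
    using lborel.nn_integral_fst[of "\<lambda>z. h (fst z, snd z + b * fst z)"] shear_measurable
    by (simp add: lborel_prod)
  also have "\<dots> = (\<integral>\<^sup>+ x. \<integral>\<^sup>+ y. h (x, y) \<partial>lborel \<partial>lborel)"
    using nn_integral_real_affine[of "\<lambda>y. h (_, y)" 1 "b * _"] by (simp add: add.commute)
  also have "\<dots> = (\<integral>\<^sup>+ z. h z \<partial>lborel)"
    using lborel.nn_integral_fst[of h] by (simp add: lborel_prod)
  finally show ?thesis by (simp add: shear_snd_def)
qed

definition rotation :: "real \<Rightarrow> real \<times> real \<Rightarrow> real \<times> real" where
  "rotation t z = (cos t * fst z - sin t * snd z, sin t * fst z + cos t * snd z)"

lemma rotation_rotation: "rotation s (rotation t z) = rotation (s + t) z"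
  by (simp add: rotation_def cos_add sin_add algebra_simps)

lemma norm_rotation [simp]: "norm (rotation t z) = norm z"
proof -
  have "(cos t * a - sin t * b)\<^sup>2 + (sin t * a + cos t * b)\<^sup>2 = a\<^sup>2 + b\<^sup>2" for a b
    using sin_cos_squared_add[of t] by algebra
  then show ?thesis by (cases z) (simp add: rotation_def norm_Pair)
qed

lemma continuous_on_rotation [continuous_intros]:
  fixes f :: "'a::t2_space \<Rightarrow> real"
  assumes "continuous_on S f" and "continuous_on S g"
  shows "continuous_on S (\<lambda>x. rotation (f x) (g x))"
  unfolding rotation_def by (intro continuous_intros assms)

lemma rotation_measurable [measurable]: "rotation t \<in> borel_measurable borel"
  unfolding rotation_def by (intro borel_measurable_continuous_onI continuous_intros)

text \<open>Paeth's decomposition of a rotation into three shears, with parameter \<open>a = - tan (t / 2)\<close>.\<close>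

lemma rotation_eq_shears:
  assumes "cos t \<noteq> -1"
  defines "a \<equiv> - sin t / (1 + cos t)"
  shows "rotation t z = shear_fst a (shear_snd (sin t) (shear_fst a z))"
proof -
  have denom_nonzero: "1 + cos t \<noteq> 0" using assms(1) by linarith
  have diag: "1 + a * sin t = cos t"
  proof -
    have "sin t * sin t = (1 - cos t) * (1 + cos t)"
      using sin_cos_squared_add[of t] by (simp add: power2_eq_square algebra_simps)
    then show ?thesis using denom_nonzero by (simp add: a_def field_simps)
  qed
  have off_diag: "2 * a + a * a * sin t = - sin t"
  proof -
    have "2 * a + a * a * sin t = a * (1 + (1 + a * sin t))" by (simp add: algebra_simps)
    also have "\<dots> = - sin t" using diag denom_nonzero by (simp add: a_def)
    finally show ?thesis .
  qed
  have "fst z + a * snd z + a * (snd z + sin t * (fst z + a * snd z)) =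
        (1 + a * sin t) * fst z + (2 * a + a * a * sin t) * snd z"
    by (simp add: algebra_simps)
  moreover have "snd z + sin t * (fst z + a * snd z) = sin t * fst z + (1 + a * sin t) * snd z"
    by (simp add: algebra_simps)
  ultimately show ?thesis
    using diag off_diag by (simp add: rotation_def shear_fst_def shear_snd_def)
qed

lemma nn_integral_lborel_rotation:
  fixes h :: "real \<times> real \<Rightarrow> ennreal"
  assumes [measurable]: "h \<in> borel_measurable borel"
  shows "(\<integral>\<^sup>+ z. h (rotation t z) \<partial>lborel) = (\<integral>\<^sup>+ z. h z \<partial>lborel)"
proof -
  have by_shears: "(\<integral>\<^sup>+ z. g (rotation s z) \<partial>lborel) = (\<integral>\<^sup>+ z. g z \<partial>lborel)"
    if "cos s \<noteq> -1" and [measurable]: "g \<in> borel_measurable borel" for s g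
  proof -
    define a where "a = - sin s / (1 + cos s)"
    have "(\<integral>\<^sup>+ z. g (rotation s z) \<partial>lborel) =
          (\<integral>\<^sup>+ z. g (shear_fst a (shear_snd (sin s) (shear_fst a z))) \<partial>lborel)"
      using rotation_eq_shears[OF that(1)] by (simp add: a_def)
    also have "\<dots> = (\<integral>\<^sup>+ z. g (shear_fst a (shear_snd (sin s) z)) \<partial>lborel)"
      by (rule nn_integral_lborel_shear_fst) measurable
    also have "\<dots> = (\<integral>\<^sup>+ z. g (shear_fst a z) \<partial>lborel)"
      by (rule nn_integral_lborel_shear_snd) measurable
    also have "\<dots> = (\<integral>\<^sup>+ z. g z \<partial>lborel)"
      by (rule nn_integral_lborel_shear_fst) measurable
    finally show ?thesis .
  qed
  show ?thesis
  proof (cases "cos t = -1")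
    case False
    then show ?thesis by (rule by_shears) measurable
  next
    case True
    then have half: "cos (t / 2) \<noteq> -1"
      using cos_double_cos[of "t / 2"] by auto
    have "(\<integral>\<^sup>+ z. h (rotation t z) \<partial>lborel) =
          (\<integral>\<^sup>+ z. h (rotation (t / 2) (rotation (t / 2) z)) \<partial>lborel)"
      by (simp add: rotation_rotation)
    also have "\<dots> = (\<integral>\<^sup>+ z. h (rotation (t / 2) z) \<partial>lborel)"
      by (rule by_shears[OF half]) measurable
    also have "\<dots> = (\<integral>\<^sup>+ z. h z \<partial>lborel)"
      by (rule by_shears[OF half]) measurable
    finally show ?thesis .
  qed
qed

lemma rotation_polar: "rotation t (r, 0) = (r * cos t, r * sin t)"
  by (simp add: rotation_def)

lemma obtain_polar_angle:
  fixes z :: "real \<times> real"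
  obtains a where "0 \<le> a" and "a \<le> 2 * pi" and "z = rotation a (norm z, 0)"
proof (cases "z = 0")
  case True
  then show ?thesis using that[of 0] by (simp add: rotation_def zero_prod_def)
next
  case False
  then have r: "norm z > 0" by simp
  have "(fst z / norm z)\<^sup>2 + (snd z / norm z)\<^sup>2 = 1"
    using False
    by (cases z) (simp add: power_divide add_divide_distrib[symmetric] norm_Pair zero_prod_def)
  then obtain a where a: "0 \<le> a" "a < 2 * pi" "fst z / norm z = cos a" "snd z / norm z = sin a"
    by (rule sincos_total_2pi)
  have "z = rotation a (norm z, 0)"
    using a(3,4) r by (cases z) (simp add: rotation_def field_simps)
  with a show ?thesis using that by simp
qed

lemma exp_average_le_average_exp:
  fixes G :: "real \<Rightarrow> real"
  assumes "a < b" and G: "continuous_on {a..b} G"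
  shows "exp (integral {a..b} G / (b - a)) \<le> integral {a..b} (\<lambda>t. exp (G t)) / (b - a)"
proof -
  define m where "m = integral {a..b} G / (b - a)"
  have G_integral: "(G has_integral m * (b - a)) {a..b}"
    using integrable_continuous_interval[OF G] \<open>a < b\<close> by (simp add: m_def has_integral_integral)
  have exp_integral: "((\<lambda>t. exp (G t)) has_integral integral {a..b} (\<lambda>t. exp (G t))) {a..b}"
    by (intro integrable_integral integrable_continuous_interval continuous_intros G)
  have tangent_integral: "((\<lambda>t. exp m * (1 + (G t - m))) has_integral exp m * (b - a)) {a..b}"
  proof -
    have "((\<lambda>t. 1 + (G t - m)) has_integral (b - a) + (m * (b - a) - m * (b - a))) {a..b}"
      using \<open>a < b\<close> by (intro has_integral_add has_integral_diff G_integral)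
        (auto intro: has_integral_const_real[THEN has_integral_eq_rhs])
    then show ?thesis by (auto dest: has_integral_mult_right)
  qed
  have "exp m * (b - a) \<le> integral {a..b} (\<lambda>t. exp (G t))"
  proof (rule has_integral_le[OF tangent_integral exp_integral])
    fix t
    have "exp m * (1 + (G t - m)) \<le> exp m * exp (G t - m)"
      by (intro mult_left_mono exp_ge_add_one_self) simp
    then show "exp m * (1 + (G t - m)) \<le> exp (G t)" by (simp add: exp_diff)
  qed
  then show ?thesis using \<open>a < b\<close> by (simp add: m_def field_simps)
qed

lemma integral_shift_periodic:
  fixes g :: "real \<Rightarrow> 'a::banach"
  assumes g: "continuous_on UNIV g" and periodic: "\<And>t. g (t + p) = g t"
    and "0 \<le> a" and "a \<le> p"
  shows "integral {0..p} (\<lambda>t. g (a + t)) = integral {0..p} g"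
proof -
  have integrable: "g integrable_on {c..d}" for c d
    by (rule integrable_continuous_interval) (use g continuous_on_subset in blast)
  have "integral {0..p} (\<lambda>t. g (a + t)) = integral {a..p + a} g"
    using integral_shift_Icc_real[of 0 p g a] by (simp add: o_def)
  also have "\<dots> = integral {a..p} g + integral {p..p + a} g"
    using Henstock_Kurzweil_Integration.integral_combine[of a p "p + a" g] \<open>0 \<le> a\<close> \<open>a \<le> p\<close>
      integrable
    by simp
  also have "integral {p..p + a} g = integral {0..a} g"
    using integral_shift_Icc_real[of 0 a g p] periodic by (simp add: o_def add.commute)
  also have "integral {a..p} g + integral {0..a} g = integral {0..p} g"
    using Henstock_Kurzweil_Integration.integral_combine[of 0 a p g] \<open>0 \<le> a\<close> \<open>a \<le> p\<close>
      integrable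
    by (simp add: add.commute)
  finally show ?thesis .
qed

lemma circ_avg_norm_eq_rotation_average:
  assumes u: "continuous_on UNIV u"
  shows "circ_avg u (norm z) = integral {0..2 * pi} (\<lambda>t. u (rotation t z)) / (2 * pi)"
proof -
  obtain a where a: "0 \<le> a" "a \<le> 2 * pi" and z: "z = rotation a (norm z, 0)"
    by (rule obtain_polar_angle)
  define g where "g t = u (rotation t (norm z, 0))" for t
  have g: "continuous_on UNIV g"
    unfolding g_def by (intro continuous_on_compose2[OF u] continuous_intros) auto
  have "circ_avg u (norm z) = integral {0..2 * pi} g / (2 * pi)"
    by (simp add: circ_avg_def g_def[abs_def] rotation_polar)
  also have "integral {0..2 * pi} g = integral {0..2 * pi} (\<lambda>t. g (a + t))"
    using integral_shift_periodic[OF g _ a] by (simp add: g_def rotation_polar)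
  also have "(\<lambda>t. g (a + t)) = (\<lambda>t. u (rotation t z))"
    unfolding g_def by (subst z) (simp add: rotation_rotation add.commute)
  finally show ?thesis .
qed

lemma exp_circ_avg_le_rotation_average:
  assumes u: "continuous_on UNIV u"
  shows "exp (2 * circ_avg u (norm z))
       \<le> integral {0..2 * pi} (\<lambda>t. exp (2 * u (rotation t z))) / (2 * pi)"
proof -
  have "continuous_on {0..2 * pi} (\<lambda>t. 2 * u (rotation t z))"
    by (intro continuous_on_compose2[OF u] continuous_intros) auto
  from exp_average_le_average_exp[OF _ this] show ?thesis
    by (simp add: circ_avg_norm_eq_rotation_average[OF u])
qed

lemma nn_integral_rotation_average:
  fixes h :: "real \<times> real \<Rightarrow> ennreal"
  assumes h [measurable]: "h \<in> borel_measurable borel" and [measurable]: "A \<in> sets borel"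
  shows "(\<integral>\<^sup>+ z. (\<integral>\<^sup>+ t \<in> A. h (rotation t z) \<partial>lborel) \<partial>lborel) =
         emeasure lborel A * (\<integral>\<^sup>+ z. h z \<partial>lborel)"
proof -
  have [measurable]:
    "(\<lambda>p :: (real \<times> real) \<times> real. h (rotation (snd p) (fst p))) \<in> borel_measurable borel"
    by (rule borel_measurable_compose_continuous[OF _ h]) (intro continuous_intros)
  have [measurable]:
    "(\<lambda>p :: (real \<times> real) \<times> real. indicator A (snd p) :: ennreal) \<in> borel_measurable borel"
    by (rule borel_measurable_compose_continuous) (intro continuous_intros, measurable)
  have joint:
    "(\<lambda>(z, t). h (rotation t z) * indicator A t) \<in> borel_measurable (lborel \<Otimes>\<^sub>M lborel)"
    unfolding lborel_prod case_prod_beta by measurable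
  have "(\<integral>\<^sup>+ z. (\<integral>\<^sup>+ t. h (rotation t z) * indicator A t \<partial>lborel) \<partial>lborel) =
        (\<integral>\<^sup>+ t. (\<integral>\<^sup>+ z. h (rotation t z) * indicator A t \<partial>lborel) \<partial>lborel)"
    using pair_sigma_finite.Fubini'[OF _ joint]
    by (simp add: pair_sigma_finite_def lborel.sigma_finite_measure_axioms)
  also have "\<dots> = (\<integral>\<^sup>+ t. (\<integral>\<^sup>+ z. h z \<partial>lborel) * indicator A t \<partial>lborel)"
    by (simp add: nn_integral_multc nn_integral_lborel_rotation)
  also have "\<dots> = (\<integral>\<^sup>+ z. h z \<partial>lborel) * emeasure lborel A"
    by (simp add: nn_integral_cmult_indicator)
  finally show ?thesis by (simp add: mult.commute)
qed

lemma nn_integral_radial_weight_exp_circ_avg_le: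
  fixes u w :: "real \<times> real \<Rightarrow> real"
  assumes u: "continuous_on UNIV u" and [measurable]: "w \<in> borel_measurable borel"
    and w_nonneg: "\<And>z. 0 \<le> w z" and w_radial: "\<And>t z. w (rotation t z) = w z"
  shows "(\<integral>\<^sup>+ z. ennreal (w z * exp (2 * circ_avg u (norm z))) \<partial>lborel)
       \<le> (\<integral>\<^sup>+ z. ennreal (w z * exp (2 * u z)) \<partial>lborel)"
proof -
  define H where "H z = ennreal (w z / (2 * pi) * exp (2 * u z))" for z
  have [measurable]: "u \<in> borel_measurable borel"
    using u by (rule borel_measurable_continuous_onI)
  have [measurable]: "H \<in> borel_measurable borel"
    unfolding H_def[abs_def] by measurable
  have circle_integral: "(\<integral>\<^sup>+ t \<in> {0..2 * pi}. H (rotation t z) \<partial>lborel) =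
      ennreal (w z / (2 * pi) * integral {0..2 * pi} (\<lambda>t. exp (2 * u (rotation t z))))" for z
  proof -
    have "((\<lambda>t. w z / (2 * pi) * exp (2 * u (rotation t z))) has_integral
          w z / (2 * pi) * integral {0..2 * pi} (\<lambda>t. exp (2 * u (rotation t z)))) {0..2 * pi}"
      by (intro has_integral_mult_right integrable_integral integrable_continuous_interval
          continuous_intros continuous_on_compose2[OF u]) auto
    from nn_integral_has_integral_lebesgue'[OF _ this] show ?thesis
      by (simp add: H_def w_radial w_nonneg)
  qed
  have "(\<integral>\<^sup>+ z. ennreal (w z * exp (2 * circ_avg u (norm z))) \<partial>lborel)
      \<le> (\<integral>\<^sup>+ z. (\<integral>\<^sup>+ t \<in> {0..2 * pi}. H (rotation t z) \<partial>lborel) \<partial>lborel)"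
  proof (rule nn_integral_mono)
    fix z
    have "w z * exp (2 * circ_avg u (norm z))
        \<le> w z / (2 * pi) * integral {0..2 * pi} (\<lambda>t. exp (2 * u (rotation t z)))"
      using mult_left_mono[OF exp_circ_avg_le_rotation_average[OF u] w_nonneg] by simp
    then show "ennreal (w z * exp (2 * circ_avg u (norm z)))
        \<le> (\<integral>\<^sup>+ t \<in> {0..2 * pi}. H (rotation t z) \<partial>lborel)"
      by (simp add: circle_integral ennreal_leI)
  qed
  also have "\<dots> = ennreal (2 * pi) * (\<integral>\<^sup>+ z. H z \<partial>lborel)"
    by (simp add: nn_integral_rotation_average)
  also have "\<dots> = (\<integral>\<^sup>+ z. ennreal (w z * exp (2 * u z)) \<partial>lborel)"
    by (simp add: H_def w_nonneg nn_integral_cmult[symmetric] flip: ennreal_mult)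
  finally show ?thesis .
qed

lemma borel_measurable_radially_antimono:
  fixes K :: "'a::{real_normed_vector, perfect_space} \<Rightarrow> real"
  assumes K_mono: "\<And>x y. norm y \<le> norm x \<Longrightarrow> K x \<le> K y"
  shows "K \<in> borel_measurable borel"
proof -
  obtain e :: 'a where e: "norm e = 1"
    using vector_choose_size zero_le_one by blast
  define k where "k r = K (max r 0 *\<^sub>R e)" for r
  have "mono (\<lambda>r. - k r)"
    by (rule monoI) (simp add: k_def e K_mono)
  then have "(\<lambda>r. - (- k r)) \<in> borel_measurable borel"
    by (intro borel_measurable_uminus borel_measurable_mono)
  then have [measurable]: "k \<in> borel_measurable borel"
    by simp
  have "K x = k (norm x)" for x
    using K_mono[of x "norm x *\<^sub>R e"] K_mono[of "norm x *\<^sub>R e" x] by (simp add: k_def e)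
  then have "K = (\<lambda>x. k (norm x))" by blast
  then show ?thesis by simp
qed

lemma C2_imp_continuous:
  assumes "C2 u"
  shows "continuous_on UNIV u"
proof -
  obtain u1 u2 where "\<And>p. (u has_derivative (\<lambda>(h1, h2). u1 p * h1 + u2 p * h2)) (at p)"
    using assms unfolding C2_def C2_with_laplacian_def by blast
  then show ?thesis
    by (intro continuous_at_imp_continuous_on ballI has_derivative_continuous)
qed

theorem lemma5p3:
  fixes K u :: "real \<times> real \<Rightarrow> real"
  assumes K_mono: "\<And>x y. norm x \<ge> norm y \<Longrightarrow> K x \<le> K y"
    and u_C2: "C2 u"
    and eq: "\<And>x. laplacian u x + K x * exp (2 * u x) = 0"
    and u_plus: "\<And>R. R > 0 \<Longrightarrow>
        (SUP y. \<integral>\<^sup>+ x \<in> ball y R. ennreal (max (u x) 0) \<partial>lborel) < \<infinity>"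
    and fin: "(\<integral>\<^sup>+ x. ennreal (\<bar>K x\<bar> * exp (2 * u x)) \<partial>lborel) < \<infinity>"
  shows "(\<integral>\<^sup>+ x. ennreal (\<bar>K x\<bar> * exp (2 * circ_avg u (norm x))) \<partial>lborel) < \<infinity> \<and>
         ((\<integral>\<^sup>+ x. ennreal ((ln (norm x))\<^sup>2 * \<bar>K x\<bar> * exp (2 * u x)) \<partial>lborel) < \<infinity> \<longrightarrow>
         (\<integral>\<^sup>+ x. ennreal ((ln (norm x))\<^sup>2 * \<bar>K x\<bar> * exp (2 * circ_avg u (norm x))) \<partial>lborel) < \<infinity>)"
proof -
  have u: "continuous_on UNIV u"
    using u_C2 by (rule C2_imp_continuous)
  have [measurable]: "K \<in> borel_measurable borel"
    using K_mono by (rule borel_measurable_radially_antimono)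
  have K_radial: "K (rotation t z) = K z" for t z
    using K_mono[of "rotation t z" z] K_mono[of z "rotation t z"] by simp
  have "(\<integral>\<^sup>+ x. ennreal (\<bar>K x\<bar> * exp (2 * circ_avg u (norm x))) \<partial>lborel)
      \<le> (\<integral>\<^sup>+ x. ennreal (\<bar>K x\<bar> * exp (2 * u x)) \<partial>lborel)"
    by (rule nn_integral_radial_weight_exp_circ_avg_le[OF u]) (simp_all add: K_radial)
  moreover have
    "(\<integral>\<^sup>+ x. ennreal ((ln (norm x))\<^sup>2 * \<bar>K x\<bar> * exp (2 * circ_avg u (norm x))) \<partial>lborel)
      \<le> (\<integral>\<^sup>+ x. ennreal ((ln (norm x))\<^sup>2 * \<bar>K x\<bar> * exp (2 * u x)) \<partial>lborel)"
    by (rule nn_integral_radial_weight_exp_circ_avg_le[OF u]) (simp_all add: K_radial)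
  ultimately show ?thesis
    using fin by (auto dest: le_less_trans)
qed

end
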